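(* Let $G=(V,E,A)$ be an undirected, unweighted attributed graph with attribute set $A=\{a,b\}$ (each vertex $v$ has one attribute $A(v)\in\{a,b\}$), let $color:V\to\mathbb{N}$ be a fixed proper vertex coloring of $G$ (adjacent vertices receive distinct colors), and let $k,\delta$ be integers. For a subgraph $H$ of $G$, an edge $(u,v)$ of $H$ and an attribute $x\in\{a,b\}$, let $$\overline{sup}^{H}_{x}(u,v)=\bigl|\{color(w)\;:\; w\in N_H(u)\cap N_H(v),\ A(w)=x\}\bigr|.$$ Let $G'$ be the maximal subgraph of $G$ such that for every edge $(u,v)$ of $G'$: (i) if $A(u)=A(v)=a$, then $\overline{sup}^{G'}_{a}(u,v)\ge k-2$ and $\overline{sup}^{G'}_{b}(u,v)\ge k$; (ii) if $A(u)=A(v)=b$, then $\overline{sup}^{G'}_{a}(u,v)\ge k$ and $\overline{sup}^{G'}_{b}(u,v)\ge k-2$; (iii) if $\{A(u),A(v)\}=\{a,b\}$, then $\overline{sup}^{G'}_{a}(u,v)\ge k-1$ and $\overline{sup}^{G'}_{b}(u,v)\ge k-1$. Then every $(k,\delta)$-relative fair clique of $G$ is contained in $G'$ (i.e., all its vertices and all edges among them belong to $G'$).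
   Context: For a vertex set $S$, $cnt_S(a)=|\{v\in S: A(v)=a\}|$ and $cnt_S(b)=|\{v\in S: A(v)=b\}|$. $N_H(u)$ denotes the set of neighbors of $u$ in $H$. A $(k,\delta)$-relative fair clique of $G$ is a clique $C$ of $G$ such that (1) $cnt_C(a)\ge k$, $cnt_C(b)\ge k$ and $|cnt_C(a)-cnt_C(b)|\le\delta$, and (2) there is no clique $C'\supsetneq C$ of $G$ satisfying (1). The quantity $\overline{sup}_x(u,v)$ is called the colorful support of edge $(u,v)$ with respect to attribute $x$. *)

theory Defs
  imports Main
begin

datatype attr = AttrA | AttrB

definition undirected_graph :: "'v set \<Rightarrow> ('v \<times> 'v) set \<Rightarrow> bool" where
  "undirected_graph V E \<longleftrightarrow> finite V \<and> E \<subseteq> V \<times> V \<and> sym E \<and> irrefl E"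

definition proper_coloring :: "('v \<times> 'v) set \<Rightarrow> ('v \<Rightarrow> nat) \<Rightarrow> bool" where
  "proper_coloring E color \<longleftrightarrow> (\<forall>u v. (u, v) \<in> E \<longrightarrow> color u \<noteq> color v)"

definition nbrs :: "('v \<times> 'v) set \<Rightarrow> 'v \<Rightarrow> 'v set" where
  "nbrs F u = {w. (u, w) \<in> F}"

definition cnt :: "('v \<Rightarrow> attr) \<Rightarrow> 'v set \<Rightarrow> attr \<Rightarrow> nat" where
  "cnt A S x = card {v \<in> S. A v = x}"

definition is_clique :: "'v set \<Rightarrow> ('v \<times> 'v) set \<Rightarrow> 'v set \<Rightarrow> bool" where
  "is_clique V E C \<longleftrightarrow> C \<subseteq> V \<and> (\<forall>u\<in>C. \<forall>v\<in>C. u \<noteq> v \<longrightarrow> (u, v) \<in> E)"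

definition fair_cond :: "('v \<Rightarrow> attr) \<Rightarrow> int \<Rightarrow> int \<Rightarrow> 'v set \<Rightarrow> bool" where
  "fair_cond A k \<delta> C \<longleftrightarrow>
     int (cnt A C AttrA) \<ge> k \<and> int (cnt A C AttrB) \<ge> k \<and>
     \<bar>int (cnt A C AttrA) - int (cnt A C AttrB)\<bar> \<le> \<delta>"

definition relative_fair_clique ::
  "'v set \<Rightarrow> ('v \<times> 'v) set \<Rightarrow> ('v \<Rightarrow> attr) \<Rightarrow> int \<Rightarrow> int \<Rightarrow> 'v set \<Rightarrow> bool" where
  "relative_fair_clique V E A k \<delta> C \<longleftrightarrow>
     is_clique V E C \<and> fair_cond A k \<delta> C \<and>
     \<not> (\<exists>C'. C \<subset> C' \<and> is_clique V E C' \<and> fair_cond A k \<delta> C')"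

definition colorful_sup ::
  "('v \<Rightarrow> nat) \<Rightarrow> ('v \<Rightarrow> attr) \<Rightarrow> ('v \<times> 'v) set \<Rightarrow> attr \<Rightarrow> 'v \<Rightarrow> 'v \<Rightarrow> nat" where
  "colorful_sup color A F x u v =
     card (color ` {w \<in> nbrs F u \<inter> nbrs F v. A w = x})"

definition is_subgraph :: "'v set \<Rightarrow> ('v \<times> 'v) set \<Rightarrow> 'v set \<Rightarrow> ('v \<times> 'v) set \<Rightarrow> bool" where
  "is_subgraph V E W F \<longleftrightarrow> W \<subseteq> V \<and> F \<subseteq> E \<and> F \<subseteq> W \<times> W \<and> sym F"

definition support_cond ::
  "('v \<Rightarrow> nat) \<Rightarrow> ('v \<Rightarrow> attr) \<Rightarrow> int \<Rightarrow> ('v \<times> 'v) set \<Rightarrow> bool" where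
  "support_cond color A k F \<longleftrightarrow>
     (\<forall>(u, v) \<in> F.
        (A u = AttrA \<and> A v = AttrA \<longrightarrow>
           int (colorful_sup color A F AttrA u v) \<ge> k - 2 \<and>
           int (colorful_sup color A F AttrB u v) \<ge> k) \<and>
        (A u = AttrB \<and> A v = AttrB \<longrightarrow>
           int (colorful_sup color A F AttrA u v) \<ge> k \<and>
           int (colorful_sup color A F AttrB u v) \<ge> k - 2) \<and>
        (A u \<noteq> A v \<longrightarrow>
           int (colorful_sup color A F AttrA u v) \<ge> k - 1 \<and>
           int (colorful_sup color A F AttrB u v) \<ge> k - 1))"

text \<open>The maximal subgraph G' satisfying (i)-(iii): the union of all subgraphs
  satisfying the conditions (which is the unique maximum, since the conditions are
  monotone under taking unions).\<close>
definition Gprime ::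
  "'v set \<Rightarrow> ('v \<times> 'v) set \<Rightarrow> ('v \<Rightarrow> nat) \<Rightarrow> ('v \<Rightarrow> attr) \<Rightarrow> int \<Rightarrow> 'v set \<times> ('v \<times> 'v) set" where
  "Gprime V E color A k =
     (\<Union>{W. \<exists>F. is_subgraph V E W F \<and> support_cond color A k F},
      \<Union>{F. \<exists>W. is_subgraph V E W F \<and> support_cond color A k F})"

end

theory Submission
  imports Defs
begin

text \<open>A fair clique C is itself a subgraph satisfying (i)--(iii), hence lies in the maximal one.
  Within C, the common neighbours of an edge (u,v) are C - {u,v}; since the colouring is proper
  they all have distinct colours, so the colourful support for attribute x is cnt_C(x) minus
  the number of endpoints with attribute x. Together with cnt_C(a), cnt_C(b) \<ge> k this gives
  exactly the thresholds k, k-1, k-2 of (i)--(iii).\<close>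

definition complete_edges :: "'v set \<Rightarrow> ('v \<times> 'v) set" where
  "complete_edges C = {(p, q). p \<in> C \<and> q \<in> C \<and> p \<noteq> q}"

lemma nbrs_complete_edges:
  "u \<in> C \<Longrightarrow> nbrs (complete_edges C) u = C - {u}"
  by (auto simp: nbrs_def complete_edges_def)

lemma is_subgraph_complete_edges:
  "is_clique V E C \<Longrightarrow> is_subgraph V E C (complete_edges C)"
  by (auto simp: is_clique_def is_subgraph_def complete_edges_def sym_def)

lemma inj_on_proper_coloring_clique:
  "proper_coloring E color \<Longrightarrow> is_clique V E C \<Longrightarrow> inj_on color C"
  unfolding inj_on_def proper_coloring_def is_clique_def by blast

lemma card_attr_Diff_pair:
  assumes "finite C" and "u \<in> C" and "v \<in> C" and "u \<noteq> v"
  shows "int (card {w \<in> C - {u, v}. A w = x}) =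
         int (cnt A C x) - (if A u = x then 1 else 0) - (if A v = x then 1 else 0)"
proof -
  let ?S = "{w \<in> C. A w = x}"
  have "card {w \<in> C - {u, v}. A w = x} = card ?S - card (?S \<inter> {u, v})"
    using assms(1) by (subst card_Diff_subset_Int[symmetric]) (auto intro: arg_cong[where f = card])
  moreover have "card (?S \<inter> {u, v}) \<le> card ?S"
    using assms(1) by (simp add: card_mono)
  moreover have "card (?S \<inter> {u, v}) = (if A u = x then 1 else 0) + (if A v = x then 1 else 0)"
    using assms(2-4) by (cases "A u = x"; cases "A v = x") (auto simp: Int_insert_right)
  ultimately show ?thesis
    by (simp add: cnt_def of_nat_diff)
qed

lemma colorful_sup_complete_edges:
  assumes "finite C" and "inj_on color C" and "u \<in> C" and "v \<in> C" and "u \<noteq> v"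
  shows "int (colorful_sup color A (complete_edges C) x u v) =
         int (cnt A C x) - (if A u = x then 1 else 0) - (if A v = x then 1 else 0)"
proof -
  have "{w \<in> nbrs (complete_edges C) u \<inter> nbrs (complete_edges C) v. A w = x} =
        {w \<in> C - {u, v}. A w = x}"
    using assms(3,4) by (auto simp: nbrs_complete_edges)
  moreover have "inj_on color {w \<in> C - {u, v}. A w = x}"
    using assms(2) by (rule inj_on_subset) auto
  ultimately show ?thesis
    using card_attr_Diff_pair[OF assms(1,3-5)] by (simp add: colorful_sup_def card_image)
qed

lemma support_cond_complete_edges:
  assumes "finite C" and "inj_on color C"
    and "int (cnt A C AttrA) \<ge> k" and "int (cnt A C AttrB) \<ge> k"
  shows "support_cond color A k (complete_edges C)"
  unfolding support_cond_def
proof (intro ballI, clarify)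
  fix u v assume "(u, v) \<in> complete_edges C"
  then have "u \<in> C" "v \<in> C" "u \<noteq> v" by (auto simp: complete_edges_def)
  note sup = colorful_sup_complete_edges[OF assms(1,2) this, of A]
  show "(A u = AttrA \<and> A v = AttrA \<longrightarrow>
          k - 2 \<le> int (colorful_sup color A (complete_edges C) AttrA u v) \<and>
          k \<le> int (colorful_sup color A (complete_edges C) AttrB u v)) \<and>
        (A u = AttrB \<and> A v = AttrB \<longrightarrow>
          k \<le> int (colorful_sup color A (complete_edges C) AttrA u v) \<and>
          k - 2 \<le> int (colorful_sup color A (complete_edges C) AttrB u v)) \<and>
        (A u \<noteq> A v \<longrightarrow>
          k - 1 \<le> int (colorful_sup color A (complete_edges C) AttrA u v) \<and>
          k - 1 \<le> int (colorful_sup color A (complete_edges C) AttrB u v))"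
    using assms(3,4) sup[of AttrA] sup[of AttrB] by (cases "A u"; cases "A v") auto
qed

lemma subgraph_le_Gprime:
  assumes "is_subgraph V E W F" and "support_cond color A k F"
  shows "W \<subseteq> fst (Gprime V E color A k)" and "F \<subseteq> snd (Gprime V E color A k)"
  using assms by (auto simp: Gprime_def)

theorem lemma3:
  fixes V :: "'v set" and E :: "('v \<times> 'v) set" and A :: "'v \<Rightarrow> attr"
    and color :: "'v \<Rightarrow> nat" and k \<delta> :: int and C :: "'v set"
  assumes "undirected_graph V E"
    and "proper_coloring E color"
    and "relative_fair_clique V E A k \<delta> C"
  shows "C \<subseteq> fst (Gprime V E color A k) \<and>
         (\<forall>u\<in>C. \<forall>v\<in>C. u \<noteq> v \<longrightarrow> (u, v) \<in> snd (Gprime V E color A k))"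
proof -
  have clique: "is_clique V E C" and fair: "fair_cond A k \<delta> C"
    using assms(3) by (auto simp: relative_fair_clique_def)
  have "finite C"
    using assms(1) clique by (auto simp: undirected_graph_def is_clique_def intro: finite_subset)
  moreover have "inj_on color C"
    using assms(2) clique by (rule inj_on_proper_coloring_clique)
  ultimately have "support_cond color A k (complete_edges C)"
    using fair by (intro support_cond_complete_edges) (auto simp: fair_cond_def)
  with is_subgraph_complete_edges[OF clique]
  show ?thesis
    using subgraph_le_Gprime by (fastforce simp: complete_edges_def)
qed

end
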